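(* Let $G=(V,E)$ be a finite connected graph and $A$ an irreducible, lazy transition matrix on $V$, with $E_A=\{(i,j):A(i,j)>0\}$. Let $M$ be the transition matrix of the Markov chain on $\bar S=S\times V$ which moves from $(x,v)$ to $(T_{v'}x,v')$ with probability $A(v,v')$. For each $i\in V$ fix a finite integer $s(i)$ and a sequence $(i=i_1,\dots,i_{s(i)})$ with $(i_j,i_{j+1})\in E_A$ such that $x^{(i)}:=T_{i_{s(i)}}\cdots T_{i_1}(T_i)^{s(i)}x$ is the same for all $x\in S^{(i)}$, and let $\bar S_1=\{(x^{(i)},i_{s(i)}):i\in V\}$. Then $M$ is uniformly communicating to $\bar S_1$ with a finite communication time: there exist a finite integer $\bar s$ and $\bar\alpha'>0$ such that $$\inf_{(x,v)\in\bar S,\;\bar x\in\bar S_1}M^{\bar s}((x,v),\bar x)\ge\bar\alpha'.$$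
   Context: $S=(-\mathbb{N}_0)^V$ and $S^{(i)}=\{x\in S:x_i=0\}$. For $x\in S$ and $i\in V$, $T_ix\in S$ is obtained by first setting $x'_i=\max\{x_k:\operatorname{dist}(k,i)\le1\}+1$, $x'_j=x_j$ for $j\ne i$ (dist the graph distance in $G$), and then $(T_ix)_j=x'_j-\max_kx'_k$. Irreducible: for all $v\neq v'$ there is $s$ with $A^s(v,v')>0$; lazy: $A(v,v)>0$ for all $v$. (Sequences as required for each $i$ exist.) *)

theory Defs
  imports Complex_Main
begin

definition simple_graph :: "('v \<Rightarrow> 'v \<Rightarrow> bool) \<Rightarrow> bool" where
  "simple_graph E \<longleftrightarrow> (\<forall>u v. E u v \<longrightarrow> E v u) \<and> (\<forall>v. \<not> E v v)"

definition connected_graph :: "('v \<Rightarrow> 'v \<Rightarrow> bool) \<Rightarrow> bool" where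
  "connected_graph E \<longleftrightarrow> (\<forall>u v. (u, v) \<in> {(a, b). E a b}\<^sup>*)"

definition Sset :: "('v \<Rightarrow> int) set" where
  "Sset = {x. \<forall>v. x v \<le> 0}"

definition Si :: "'v \<Rightarrow> ('v \<Rightarrow> int) set" where
  "Si i = {x \<in> Sset. x i = 0}"

text \<open>The update T_i: dist(k,i) \<le> 1 iff k = i or k adjacent to i.\<close>
definition Tmap :: "('v::finite \<Rightarrow> 'v \<Rightarrow> bool) \<Rightarrow> 'v \<Rightarrow> ('v \<Rightarrow> int) \<Rightarrow> ('v \<Rightarrow> int)" where
  "Tmap E i x = (let x' = x(i := Max {x k | k. k = i \<or> E k i} + 1)
                 in (\<lambda>j. x' j - Max (range x')))"

definition stochastic :: "('v::finite \<Rightarrow> 'v \<Rightarrow> real) \<Rightarrow> bool" where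
  "stochastic A \<longleftrightarrow> (\<forall>u v. A u v \<ge> 0) \<and> (\<forall>u. (\<Sum>v\<in>UNIV. A u v) = 1)"

fun matpow :: "('v::finite \<Rightarrow> 'v \<Rightarrow> real) \<Rightarrow> nat \<Rightarrow> 'v \<Rightarrow> 'v \<Rightarrow> real" where
  "matpow A 0 u v = (if u = v then 1 else 0)"
| "matpow A (Suc n) u v = (\<Sum>w\<in>UNIV. A u w * matpow A n w v)"

definition irreducible_mat :: "('v::finite \<Rightarrow> 'v \<Rightarrow> real) \<Rightarrow> bool" where
  "irreducible_mat A \<longleftrightarrow> (\<forall>v v'. v \<noteq> v' \<longrightarrow> (\<exists>s. matpow A s v v' > 0))"

definition lazy_mat :: "('v \<Rightarrow> 'v \<Rightarrow> real) \<Rightarrow> bool" where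
  "lazy_mat A \<longleftrightarrow> (\<forall>v. A v v > 0)"

definition Mstep :: "('v::finite \<Rightarrow> 'v \<Rightarrow> bool) \<Rightarrow> ('v \<Rightarrow> 'v \<Rightarrow> real)
    \<Rightarrow> ('v \<Rightarrow> int) \<times> 'v \<Rightarrow> ('v \<Rightarrow> int) \<times> 'v \<Rightarrow> real" where
  "Mstep E A a b = (if fst b = Tmap E (snd b) (fst a) then A (snd a) (snd b) else 0)"

fun Mpow :: "('v::finite \<Rightarrow> 'v \<Rightarrow> bool) \<Rightarrow> ('v \<Rightarrow> 'v \<Rightarrow> real) \<Rightarrow> nat
    \<Rightarrow> ('v \<Rightarrow> int) \<times> 'v \<Rightarrow> ('v \<Rightarrow> int) \<times> 'v \<Rightarrow> real" where
  "Mpow E A 0 a b = (if a = b then 1 else 0)"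
| "Mpow E A (Suc n) a b =
     (\<Sum>w\<in>UNIV. A (snd a) w * Mpow E A n (Tmap E w (fst a), w) b)"

text \<open>For a sequence l = [i_1,...,i_s] (with i_1 = i):
  seqmap E i l x = T_{i_s} ... T_{i_1} (T_i)^s x.\<close>
definition seqmap :: "('v::finite \<Rightarrow> 'v \<Rightarrow> bool) \<Rightarrow> 'v \<Rightarrow> 'v list \<Rightarrow> ('v \<Rightarrow> int) \<Rightarrow> ('v \<Rightarrow> int)" where
  "seqmap E i l x = fold (Tmap E) l ((Tmap E i ^^ length l) x)"

definition valid_seq :: "('v \<Rightarrow> 'v \<Rightarrow> real) \<Rightarrow> 'v \<Rightarrow> 'v list \<Rightarrow> bool" where
  "valid_seq A i l \<longleftrightarrow> l \<noteq> [] \<and> hd l = i \<and>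
     (\<forall>j. Suc j < length l \<longrightarrow> A (l ! j) (l ! Suc j) > 0)"

end

theory Submission
  imports Defs
begin

text \<open>Call \<open>max\<^sub>k x\<^sub>k - x\<^sub>p\<close> the deficit of \<open>x\<close> at \<open>p\<close>. An update \<open>T\<^sub>u\<close> raises every deficit by at
  most one, and brings the deficit at \<open>u\<close> below that at any neighbour of \<open>u\<close>, down to zero.
  Hence the maximum of a configuration can be handed along a path of \<open>G\<close> towards any vertex \<open>i\<close>:
  for each path edge, walk to its head in a fixed number of steps and then stay there until the
  deficit has dropped back to zero. This puts every configuration into \<open>S\<^sup>(\<^sup>i\<^sup>)\<close> after a number of
  steps independent of the start, and the prescribed sequence for \<open>i\<close> then leads to \<open>x\<^sup>(\<^sup>i\<^sup>)\<close>.
  Irreducibility and laziness provide all these walks with a common length \<open>s\<close>, each with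
  probability at least \<open>\<alpha>\<^sup>s\<close> for the least positive entry \<open>\<alpha>\<close> of \<open>A\<close>.\<close>

definition deficit :: "('v::finite \<Rightarrow> int) \<Rightarrow> 'v \<Rightarrow> int" where
  "deficit x p = Max (range x) - x p"

definition nbhd_max :: "('v::finite \<Rightarrow> 'v \<Rightarrow> bool) \<Rightarrow> 'v \<Rightarrow> ('v \<Rightarrow> int) \<Rightarrow> int" where
  "nbhd_max E u x = Max {x k | k. k = u \<or> E k u}"

lemma deficit_nonneg: "0 \<le> deficit x p"
  by (simp add: deficit_def)

lemma deficit_Max_eq_0: "\<exists>m. deficit (x :: 'v::finite \<Rightarrow> int) m = 0"
proof -
  have "Max (range x) \<in> range x" by (rule Max_in) auto
  then show ?thesis by (auto simp: deficit_def image_iff)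
qed

lemma Max_range_minus_const:
  "Max (range (\<lambda>j. f j - c)) = Max (range (f :: 'v::finite \<Rightarrow> int)) - c"
  using mono_Max_commute[of "\<lambda>y. y - c" "range f"]
  by (simp add: mono_def image_comp comp_def)

lemma Max_range_fun_upd_le:
  "Max (range ((f :: 'v::finite \<Rightarrow> int)(a := b))) \<le> max b (Max (range f))"
  by (subst Max_le_iff) (auto simp: le_max_iff_disj)

lemma nbhd_max_ge: "k = u \<or> E k u \<Longrightarrow> x k \<le> nbhd_max E u x"
  unfolding nbhd_max_def by (rule Max_ge) (auto intro: finite_subset[of _ "range x"])

lemma nbhd_max_le: "nbhd_max E u x \<le> Max (range x)"
  unfolding nbhd_max_def
  by (subst Max_le_iff) (auto intro: finite_subset[of _ "range x"])

lemma Tmap_eq_normalise: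
  "Tmap E u x = (\<lambda>j. (x(u := nbhd_max E u x + 1)) j - Max (range (x(u := nbhd_max E u x + 1))))"
  by (simp add: Tmap_def nbhd_max_def Let_def)

lemma Max_range_Tmap [simp]: "Max (range (Tmap E u x)) = 0"
  unfolding Tmap_eq_normalise Max_range_minus_const by simp

lemma deficit_Tmap: "deficit (Tmap E u x) p = deficit (x(u := nbhd_max E u x + 1)) p"
  by (simp only: deficit_def Tmap_eq_normalise Max_range_minus_const)

lemma deficit_Tmap_le: "deficit (Tmap E u x) p \<le> deficit x p + 1"
  unfolding deficit_Tmap unfolding deficit_def
  using Max_range_fun_upd_le[of x u "nbhd_max E u x + 1"] nbhd_max_le[of E u x] nbhd_max_ge[of u u E x]
  by (cases "p = u") (auto simp del: Max_le_iff)

lemma deficit_Tmap_adj: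
  assumes "p = q \<or> E p q"
  shows "deficit (Tmap E q x) q \<le> max 0 (deficit x p - 1)"
  unfolding deficit_Tmap unfolding deficit_def
  using Max_range_fun_upd_le[of x q "nbhd_max E q x + 1"] nbhd_max_ge[of p q E x] assms
  by (auto simp del: Max_le_iff)

lemma deficit_fold_Tmap_le: "deficit (fold (Tmap E) ws x) p \<le> deficit x p + int (length ws)"
proof (induction ws arbitrary: x)
  case (Cons u ws)
  have "deficit (fold (Tmap E) ws (Tmap E u x)) p \<le> deficit (Tmap E u x) p + int (length ws)"
    by (rule Cons.IH)
  then show ?case using deficit_Tmap_le[of E u x p] by simp
qed simp

lemma deficit_funpow_Tmap: "deficit ((Tmap E q ^^ k) x) q \<le> max 0 (deficit x q - int k)"
proof (induction k)
  case (Suc k)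
  then show ?case using deficit_Tmap_adj[of q q E "(Tmap E q ^^ k) x"] by simp
qed (simp add: deficit_nonneg)

text \<open>A maximum at a vertex \<open>p\<close> next to \<open>q\<close> is carried to \<open>q\<close> by any walk of length \<open>W\<close> that
  ends in \<open>q\<close> followed by \<open>W\<close> lazy steps at \<open>q\<close>: the walk raises the deficit at \<open>p\<close> by less
  than \<open>W\<close> before its last step moves it to \<open>q\<close>, and each lazy step lowers it by one.\<close>

lemma deficit_zero_after_walk_and_wait:
  assumes "ws \<noteq> []" "last ws = q" "p = q \<or> E p q" "deficit x p = 0"
  shows "deficit (fold (Tmap E) (ws @ replicate (length ws) q) x) q = 0"
proof -
  obtain ws0 where ws: "ws = ws0 @ [q]"
    using assms(1,2) append_butlast_last_id by metis
  define y where "y = fold (Tmap E) ws0 x"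
  have "deficit y p \<le> int (length ws0)"
    using deficit_fold_Tmap_le[of E ws0 x p] assms(4) by (simp add: y_def)
  with deficit_Tmap_adj[of p q E y] assms(3)
  have "deficit (Tmap E q y) q \<le> int (Suc (length ws0))" by simp
  then have "deficit ((Tmap E q ^^ Suc (length ws0)) (Tmap E q y)) q \<le> 0"
    using deficit_funpow_Tmap[where E = E and q = q and k = "Suc (length ws0)" and x = "Tmap E q y"]
    by simp
  moreover have "fold (Tmap E) (ws @ replicate (length ws) q) x
      = (Tmap E q ^^ Suc (length ws0)) (Tmap E q y)"
    by (simp add: ws y_def funpow_Suc_right del: funpow.simps)
  ultimately show ?thesis using deficit_nonneg by (metis antisym)
qed

lemma successively_Cons_append_iff:
  "successively R (v # xs @ ys) \<longleftrightarrow> successively R (v # xs) \<and> successively R (last (v # xs) # ys)"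
  using successively_append_iff[of R "v # xs" ys] by (cases ys) auto

lemma successively_replicate: "R a a \<Longrightarrow> successively R (a # replicate k a)"
  by (induction k) auto

lemma last_replicate_Cons_append: "last (a # replicate k a @ ys) = last (a # ys)"
  by (induction k) auto

lemma uniform_length_walks:
  fixes R :: "'a::finite \<Rightarrow> 'a \<Rightarrow> bool"
  assumes refl: "\<And>a. R a a"
    and walks: "\<And>a b. \<exists>ws. successively R (a # ws) \<and> last (a # ws) = b"
  obtains N where "0 < N"
    and "\<And>a b. \<exists>ws. length ws = N \<and> successively R (a # ws) \<and> last (a # ws) = b"
proof -
  obtain f where f: "\<And>a b. successively R (a # f a b) \<and> last (a # f a b) = b"
    using walks by metis
  define N where "N = Suc (Max (range (\<lambda>(a, b). length (f a b))))"
  have "\<exists>ws. length ws = N \<and> successively R (a # ws) \<and> last (a # ws) = b" for a b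
  proof (intro exI conjI)
    have "length (f a b) \<le> Max (range (\<lambda>(a, b). length (f a b)))"
      by (rule Max_ge) (auto intro: image_eqI[where x = "(a, b)"])
    then show "length (replicate (N - length (f a b)) a @ f a b) = N"
      by (simp add: N_def)
    show "successively R (a # replicate (N - length (f a b)) a @ f a b)"
      using successively_replicate[of R a] f[of a b] refl
      by (simp add: successively_Cons_append_iff del: successively.simps)
    show "last (a # replicate (N - length (f a b)) a @ f a b) = b"
      using f[of a b] by (simp only: last_replicate_Cons_append)
  qed
  then show thesis by (intro that[of N]) (simp_all add: N_def)
qed

lemma walk_of_matpow_pos:
  assumes "stochastic A"
  shows "0 < matpow A n u v \<Longrightarrow> \<exists>ws. successively (\<lambda>a b. 0 < A a b) (u # ws) \<and> last (u # ws) = v"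
proof (induction n arbitrary: u)
  case 0
  then show ?case by (auto intro: exI[of _ "[]"] split: if_splits)
next
  case (Suc n)
  have "\<not> (\<Sum>w\<in>UNIV. A u w * matpow A n w v) \<le> 0" using Suc.prems by simp
  then obtain w where w: "0 < A u w * matpow A n w v"
    using sum_nonpos[of UNIV "\<lambda>w. A u w * matpow A n w v"] by (meson not_le)
  moreover have "0 \<le> A u w" using assms by (simp add: stochastic_def)
  ultimately have "0 < A u w" "0 < matpow A n w v" by (auto simp: zero_less_mult_iff)
  with Suc.IH obtain ws where "successively (\<lambda>a b. 0 < A a b) (w # ws)" "last (w # ws) = v"
    by blast
  with \<open>0 < A u w\<close> show ?case by (intro exI[of _ "w # ws"]) auto
qed

lemma irreducible_lazy_uniform_walks:
  fixes A :: "'v::finite \<Rightarrow> 'v \<Rightarrow> real"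
  assumes "stochastic A" "irreducible_mat A" "lazy_mat A"
  obtains W where "0 < W"
    and "\<And>u v. \<exists>ws. length ws = W \<and> successively (\<lambda>a b. 0 < A a b) (u # ws) \<and> last (u # ws) = v"
proof (rule uniform_length_walks[where R = "\<lambda>a b. 0 < A a b"])
  show "0 < A a a" for a using assms(3) by (simp add: lazy_mat_def)
  show "\<exists>ws. successively (\<lambda>a b. 0 < A a b) (u # ws) \<and> last (u # ws) = v" for u v
  proof (cases "u = v")
    case False
    then obtain n where "0 < matpow A n u v"
      using assms(2) by (auto simp: irreducible_mat_def)
    then show ?thesis by (rule walk_of_matpow_pos[OF assms(1)])
  qed (auto intro: exI[of _ "[]"])
qed (blast intro: that)

lemma walk_of_rtrancl:
  "(a, b) \<in> {(a, b). E a b}\<^sup>* \<Longrightarrow>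
    \<exists>ps. successively (\<lambda>a b. a = b \<or> E a b) (a # ps) \<and> last (a # ps) = b"
proof (induction rule: rtrancl_induct)
  case base
  then show ?case by (auto intro: exI[of _ "[]"])
next
  case (step y z)
  then obtain ps where "successively (\<lambda>a b. a = b \<or> E a b) (a # ps)" "last (a # ps) = y"
    by blast
  with step(2) show ?case
    by (intro exI[of _ "ps @ [z]"]) (simp add: successively_Cons_append_iff[of _ a ps "[z]"])
qed

lemma connected_uniform_paths:
  fixes E :: "'v::finite \<Rightarrow> 'v \<Rightarrow> bool"
  assumes "connected_graph E"
  obtains N where "0 < N"
    and "\<And>a b. \<exists>ps. length ps = N \<and> successively (\<lambda>a b. a = b \<or> E a b) (a # ps) \<and> last (a # ps) = b"
proof (rule uniform_length_walks[where R = "\<lambda>a b. a = b \<or> E a b"])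
  show "\<exists>ps. successively (\<lambda>a b. a = b \<or> E a b) (a # ps) \<and> last (a # ps) = b" for a b
    by (rule walk_of_rtrancl) (use assms in \<open>simp add: connected_graph_def\<close>)
qed (blast intro: that)+

lemma Mpow_nonneg: "stochastic A \<Longrightarrow> 0 \<le> Mpow E A n a b"
  by (induction n arbitrary: a) (auto simp: stochastic_def intro!: sum_nonneg)

lemma Mpow_ge_walk:
  assumes "stochastic A" "0 \<le> \<alpha>" "\<And>u w. 0 < A u w \<Longrightarrow> \<alpha> \<le> A u w"
  shows "successively (\<lambda>a b. 0 < A a b) (v # ws) \<Longrightarrow>
    \<alpha> ^ length ws * Mpow E A n (fold (Tmap E) ws x, last (v # ws)) b \<le> Mpow E A (length ws + n) (x, v) b"
proof (induction ws arbitrary: x v)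
  case (Cons w ws)
  have A_nonneg: "0 \<le> A u u'" for u u' using assms(1) by (simp add: stochastic_def)
  have "0 < A v w" using Cons.prems by simp
  have "\<alpha> ^ length ws * Mpow E A n (fold (Tmap E) ws (Tmap E w x), last (w # ws)) b
      \<le> Mpow E A (length ws + n) (Tmap E w x, w) b"
    using Cons.prems by (intro Cons.IH) simp
  then have "\<alpha> * (\<alpha> ^ length ws * Mpow E A n (fold (Tmap E) ws (Tmap E w x), last (w # ws)) b)
      \<le> A v w * Mpow E A (length ws + n) (Tmap E w x, w) b"
    using assms(2) assms(3)[OF \<open>0 < A v w\<close>] Mpow_nonneg[OF assms(1)] by (intro mult_mono) auto
  also have "\<dots> \<le> (\<Sum>w'\<in>UNIV. A v w' * Mpow E A (length ws + n) (Tmap E w' x, w') b)"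
    by (rule member_le_sum) (auto intro!: mult_nonneg_nonneg A_nonneg Mpow_nonneg[OF assms(1)])
  finally show ?case by (simp add: mult.assoc)
qed simp

lemma positive_entries_lower_bound:
  fixes A :: "'v::finite \<Rightarrow> 'v \<Rightarrow> real"
  obtains \<alpha> where "0 < \<alpha>" "\<And>u w. 0 < A u w \<Longrightarrow> \<alpha> \<le> A u w"
proof
  let ?P = "insert 1 (range (case_prod A) \<inter> {0<..})"
  have "finite ?P" by simp
  then show "0 < Min ?P" by (subst Min_gr_iff) auto
  show "Min ?P \<le> A u w" if "0 < A u w" for u w
    using \<open>finite ?P\<close> that by (intro Min_le) (auto intro: image_eqI[where x = "(u, w)"])
qed

lemma Max_range_fold_Tmap: "ws \<noteq> [] \<Longrightarrow> Max (range (fold (Tmap E) ws x)) = 0"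
  by (induction ws rule: rev_induct) auto

lemma Si_iff_deficit: "x \<in> Si i \<longleftrightarrow> Max (range x) = 0 \<and> deficit x i = 0"
proof
  assume "x \<in> Si i"
  then have "Max (range x) = x i" by (intro Max_eqI) (auto simp: Si_def Sset_def)
  with \<open>x \<in> Si i\<close> show "Max (range x) = 0 \<and> deficit x i = 0" by (simp add: Si_def deficit_def)
next
  assume "Max (range x) = 0 \<and> deficit x i = 0"
  moreover have "x v \<le> Max (range x)" for v by simp
  ultimately show "x \<in> Si i" by (simp add: Si_def Sset_def deficit_def)
qed

lemma funpow_Tmap_Si: "x \<in> Si i \<Longrightarrow> (Tmap E i ^^ k) x \<in> Si i"
  using deficit_funpow_Tmap[where E = E and q = i and k = k and x = x] deficit_nonneg[of "(Tmap E i ^^ k) x" i]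
  by (cases k) (auto simp: Si_iff_deficit)

lemma deficit_zero_along_path:
  fixes P :: "'v::finite \<Rightarrow> 'v \<Rightarrow> bool"
  assumes walks: "\<And>c q. \<exists>ws. length ws = W \<and> successively P (c # ws) \<and> last (c # ws) = q"
    and "0 < W" and lazy: "\<And>q. P q q"
  shows "successively (\<lambda>a b. a = b \<or> E a b) (p # ps) \<Longrightarrow> ps \<noteq> [] \<Longrightarrow> deficit x p = 0 \<Longrightarrow>
    \<exists>ws. length ws = 2 * W * length ps \<and> successively P (c # ws) \<and> last (c # ws) = last ps
      \<and> deficit (fold (Tmap E) ws x) (last ps) = 0"
proof (induction ps arbitrary: p x c)
  case (Cons q qs)
  obtain w where w: "length w = W" "successively P (c # w)" "last (c # w) = q"
    using walks by blast
  have "w \<noteq> []" using w(1) \<open>0 < W\<close> by auto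
  define ws1 where "ws1 = w @ replicate W q"
  have len1: "length ws1 = 2 * W" using w(1) by (simp add: ws1_def)
  have walk1: "successively P (c # ws1)"
    using w(2,3) successively_replicate[of P q W] lazy
    by (simp add: ws1_def successively_Cons_append_iff del: successively.simps)
  have last1: "last (c # ws1) = q" using \<open>0 < W\<close> by (simp add: ws1_def)
  have "p = q \<or> E p q" using Cons.prems(1) by simp
  then have deficit1: "deficit (fold (Tmap E) ws1 x) q = 0"
    using deficit_zero_after_walk_and_wait[OF \<open>w \<noteq> []\<close> _ _ Cons.prems(3)] w \<open>w \<noteq> []\<close>
    by (simp add: ws1_def)
  show ?case
  proof (cases "qs = []")
    case True
    with len1 walk1 last1 deficit1 show ?thesis by (intro exI[of _ ws1]) simp
  next
    case False
    obtain ws2 where ws2: "length ws2 = 2 * W * length qs" "successively P (q # ws2)"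
        "last (q # ws2) = last qs" "deficit (fold (Tmap E) ws2 (fold (Tmap E) ws1 x)) (last qs) = 0"
      using Cons.IH[OF _ False deficit1] Cons.prems(1) by auto
    have "ws2 \<noteq> []" using ws2(1) False \<open>0 < W\<close> by auto
    with ws2 len1 walk1 last1 False show ?thesis
      by (intro exI[of _ "ws1 @ ws2"]) (simp add: successively_Cons_append_iff)
  qed
qed simp

lemma walks_into_Si:
  fixes E :: "'v::finite \<Rightarrow> 'v \<Rightarrow> bool" and A :: "'v \<Rightarrow> 'v \<Rightarrow> real"
  assumes "connected_graph E" "stochastic A" "irreducible_mat A" "lazy_mat A"
  obtains n where "\<And>k x v i. \<exists>ws. length ws = n + k \<and> successively (\<lambda>a b. 0 < A a b) (v # ws)
    \<and> last (v # ws) = i \<and> fold (Tmap E) ws x \<in> Si i"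
proof -
  obtain W where "0 < W" and walks:
    "\<And>u v. \<exists>ws. length ws = W \<and> successively (\<lambda>a b. 0 < A a b) (u # ws) \<and> last (u # ws) = v"
    using irreducible_lazy_uniform_walks[OF assms(2-4)] by blast
  obtain N where "0 < N" and paths:
    "\<And>a b. \<exists>ps. length ps = N \<and> successively (\<lambda>a b. a = b \<or> E a b) (a # ps) \<and> last (a # ps) = b"
    using connected_uniform_paths[OF assms(1)] by blast
  have lazy: "0 < A q q" for q using assms(4) by (simp add: lazy_mat_def)
  have "\<exists>ws. length ws = 2 * W * N + k \<and> successively (\<lambda>a b. 0 < A a b) (v # ws)
    \<and> last (v # ws) = i \<and> fold (Tmap E) ws x \<in> Si i" for k x v i
  proof -
    obtain m where "deficit x m = 0" using deficit_Max_eq_0 by blast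
    obtain ps where ps: "length ps = N" "successively (\<lambda>a b. a = b \<or> E a b) (m # ps)"
      "last (m # ps) = i"
      using paths by blast
    have "ps \<noteq> []" using ps(1) \<open>0 < N\<close> by auto
    obtain ws1 where ws1: "length ws1 = 2 * W * N" "successively (\<lambda>a b. 0 < A a b) (v # ws1)"
        "last (v # ws1) = i" "deficit (fold (Tmap E) ws1 x) i = 0"
      using deficit_zero_along_path[OF walks \<open>0 < W\<close> lazy ps(2) \<open>ps \<noteq> []\<close> \<open>deficit x m = 0\<close>]
        ps \<open>ps \<noteq> []\<close> by auto
    have "ws1 \<noteq> []" using ws1(1) \<open>0 < W\<close> \<open>0 < N\<close> by auto
    then have "fold (Tmap E) ws1 x \<in> Si i"
      using ws1(4) Max_range_fold_Tmap by (auto simp: Si_iff_deficit)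
    then have "fold (Tmap E) (ws1 @ replicate k i) x \<in> Si i" by (simp add: funpow_Tmap_Si)
    moreover have "successively (\<lambda>a b. 0 < A a b) (v # ws1 @ replicate k i)"
      using ws1(2,3) successively_replicate[of _ i k] lazy
      by (simp add: successively_Cons_append_iff del: successively.simps)
    moreover have "last (v # ws1 @ replicate k i) = i" using ws1(3) by (cases k) auto
    ultimately show ?thesis using ws1(1) by (intro exI[of _ "ws1 @ replicate k i"]) simp
  qed
  then show thesis by (rule that)
qed

text \<open>Waiting \<open>2 (max\<^sub>j |sq j| - |sq i|)\<close> lazy steps at \<open>i\<close> inside \<open>S\<^sup>(\<^sup>i\<^sup>)\<close> makes the total length
  independent of \<open>i\<close>.\<close>

lemma walks_to_target:
  fixes E :: "'v::finite \<Rightarrow> 'v \<Rightarrow> bool" and A :: "'v \<Rightarrow> 'v \<Rightarrow> real"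
  assumes "connected_graph E" "stochastic A" "irreducible_mat A" "lazy_mat A"
    and valid: "\<And>i. valid_seq A i (sq i)"
    and forget: "\<And>i x y. x \<in> Si i \<Longrightarrow> y \<in> Si i \<Longrightarrow> seqmap E i (sq i) x = seqmap E i (sq i) y"
  obtains s where "\<And>x v i z. z \<in> Si i \<Longrightarrow> \<exists>ws. length ws = s \<and> successively (\<lambda>a b. 0 < A a b) (v # ws)
    \<and> last (v # ws) = last (sq i) \<and> fold (Tmap E) ws x = seqmap E i (sq i) z"
proof -
  obtain n where reach: "\<And>k x v i. \<exists>ws. length ws = n + k \<and> successively (\<lambda>a b. 0 < A a b) (v # ws)
    \<and> last (v # ws) = i \<and> fold (Tmap E) ws x \<in> Si i"
    using walks_into_Si[OF assms(1-4)] by blast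
  define Lmax where "Lmax = Max (range (\<lambda>i. length (sq i)))"
  have "\<exists>ws. length ws = n + 2 * Lmax \<and> successively (\<lambda>a b. 0 < A a b) (v # ws)
    \<and> last (v # ws) = last (sq i) \<and> fold (Tmap E) ws x = seqmap E i (sq i) z"
    if "z \<in> Si i" for x v i z
  proof -
    define L where "L = length (sq i)"
    have "L \<le> Lmax" by (simp add: L_def Lmax_def)
    obtain ws1 where ws1: "length ws1 = n + 2 * (Lmax - L)" "successively (\<lambda>a b. 0 < A a b) (v # ws1)"
        "last (v # ws1) = i" "fold (Tmap E) ws1 x \<in> Si i"
      using reach by blast
    obtain t where sq: "sq i = i # t" "successively (\<lambda>a b. 0 < A a b) (sq i)"
      using valid[of i] by (cases "sq i") (auto simp: valid_seq_def successively_conv_nth)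
    have "successively (\<lambda>a b. 0 < A a b) (i # sq i)" using sq assms(4) by (simp add: lazy_mat_def)
    let ?ws = "ws1 @ replicate L i @ sq i"
    have "length ?ws = n + 2 * Lmax" using ws1(1) \<open>L \<le> Lmax\<close> by (simp add: L_def)
    moreover have "successively (\<lambda>a b. 0 < A a b) (v # ?ws)"
      using ws1(2,3) \<open>successively (\<lambda>a b. 0 < A a b) (i # sq i)\<close> successively_replicate[of _ i L] assms(4)
      by (simp add: successively_Cons_append_iff lazy_mat_def del: successively.simps)
    moreover have "last (v # ?ws) = last (sq i)" using sq(1) by simp
    moreover have "fold (Tmap E) ?ws x = seqmap E i (sq i) z"
      using forget[OF ws1(4) that] by (simp add: seqmap_def L_def)
    ultimately show ?thesis by blast
  qed
  then show thesis by (rule that)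
qed

theorem mainTheorem10:
  fixes E :: "'v::finite \<Rightarrow> 'v \<Rightarrow> bool"
    and A :: "'v \<Rightarrow> 'v \<Rightarrow> real"
    and sq :: "'v \<Rightarrow> 'v list"
  assumes "simple_graph E" and "connected_graph E"
    and "stochastic A" and "irreducible_mat A" and "lazy_mat A"
    and "\<And>i. valid_seq A i (sq i)"
    and "\<And>i x y. x \<in> Si i \<Longrightarrow> y \<in> Si i \<Longrightarrow> seqmap E i (sq i) x = seqmap E i (sq i) y"
  shows "\<exists>s::nat. \<exists>\<alpha>::real. \<alpha> > 0 \<and>
           (\<forall>x \<in> Sset. \<forall>v. \<forall>i. \<forall>z \<in> Si i.
              Mpow E A s (x, v) (seqmap E i (sq i) z, last (sq i)) \<ge> \<alpha>)"
proof -
  obtain s where walks: "\<And>x v i z. z \<in> Si i \<Longrightarrow> \<exists>ws. length ws = s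
    \<and> successively (\<lambda>a b. 0 < A a b) (v # ws)
    \<and> last (v # ws) = last (sq i) \<and> fold (Tmap E) ws x = seqmap E i (sq i) z"
    using walks_to_target[OF assms(2-7)] by blast
  obtain \<alpha> where "0 < \<alpha>" and \<alpha>: "\<And>u w. 0 < A u w \<Longrightarrow> \<alpha> \<le> A u w"
    using positive_entries_lower_bound by blast
  have "\<alpha> ^ s \<le> Mpow E A s (x, v) (seqmap E i (sq i) z, last (sq i))" if z: "z \<in> Si i" for x v i z
  proof -
    obtain ws where ws: "length ws = s" "successively (\<lambda>a b. 0 < A a b) (v # ws)"
      "last (v # ws) = last (sq i)" "fold (Tmap E) ws x = seqmap E i (sq i) z"
      using walks[OF z] by blast
    from Mpow_ge_walk[OF assms(3) less_imp_le[OF \<open>0 < \<alpha>\<close>] \<alpha> ws(2), where n = 0 and E = E and x = x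
        and b = "(fold (Tmap E) ws x, last (v # ws))"]
    show ?thesis by (simp only: ws) simp
  qed
  with \<open>0 < \<alpha>\<close> show ?thesis by (intro exI[of _ s] exI[of _ "\<alpha> ^ s"]) auto
qed

end
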